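(* Let $G=(V,E,\omega)\in\mathcal G$. For $i,j\in V$ let $\mathcal N(j)=\{k\in V:\omega_{jk}>0\}$ and $\mathcal N_s(i,j):=\sum_{k\in\mathcal N(j)}\omega_{ik}$. Then: (1) if for all $j\in V$ and all $i\in\mathcal N(j)$ we have $\omega_{ij}\,\mathcal M(\nu^{V\setminus\{j\}})\leq\mathrm{vol}(V)\,d_i^r$, then $G\in\mathcal C$; (2) if for all $j\in V$ and all $i\in V\setminus(\{j\}\cup\mathcal N(j))$ we have $\mathcal N_s(i,j)\,\mathcal M(\nu^{V\setminus\{j\}})\leq\mathrm{vol}(V)\,d_i^r$, then $G\in\mathcal C^0$.
   Context: $\mathcal{G}$ is the set of finite, simple, connected, undirected, edge-weighted graphs $G=(V,E,\omega)$ with $V=\{1,\dots,n\}$, $n\geq2$, weights $\omega_{ij}=\omega_{ji}>0$ on edges, $0$ otherwise. $d_i=\sum_j\omega_{ij}$. Fixed $r\in[0,1]$: for $u:V\to\mathbb R$, $(\Delta u)_i=d_i^{-r}\sum_j\omega_{ij}(u_i-u_j)$, $\mathcal M(u)=\sum_id_i^ru_i$, $\mathrm{vol}(V)=\sum_id_i^r$, $\mathcal A(u)=\frac{\mathcal M(u)}{\mathrm{vol}(V)}\chi_V$. Equilibrium measure $\nu^S$ ($S\subsetneq V$): unique $\nu$ with $(\Delta\nu)_i=1$ on $S$, $\nu=0$ off $S$. $f^j:=\nu^{V\setminus\{j\}}-\mathcal A(\nu^{V\setminus\{j\}})$. $\mathcal C=\{G\in\mathcal G:\forall j\ \forall i\neq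 j:\ f^j_i\geq0\}$; $\mathcal C^0=\{G\in\mathcal G:\forall j\ \forall i\neq j:\ \omega_{ij}>0\text{ or }f^j_i\geq0\}$. *)

theory Defs
  imports Main Complex_Main
begin

text \<open>Weighted graphs on the vertex set V = {1..n}, weights w :: nat => nat => real.
Only the values of w on V x V are relevant.\<close>

definition verts :: "nat \<Rightarrow> nat set" where
  "verts n = {1..n}"

definition edge_rel :: "nat \<Rightarrow> (nat \<Rightarrow> nat \<Rightarrow> real) \<Rightarrow> (nat \<times> nat) set" where
  "edge_rel n w = {(i, j). i \<in> verts n \<and> j \<in> verts n \<and> w i j > 0}"

definition is_graph :: "nat \<Rightarrow> (nat \<Rightarrow> nat \<Rightarrow> real) \<Rightarrow> bool" where
  "is_graph n w \<longleftrightarrow> n \<ge> 2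
     \<and> (\<forall>i\<in>verts n. \<forall>j\<in>verts n. w i j = w j i)
     \<and> (\<forall>i\<in>verts n. \<forall>j\<in>verts n. w i j \<ge> 0)
     \<and> (\<forall>i\<in>verts n. w i i = 0)
     \<and> (\<forall>i\<in>verts n. \<forall>j\<in>verts n. (i, j) \<in> (edge_rel n w)\<^sup>*)"

definition deg :: "nat \<Rightarrow> (nat \<Rightarrow> nat \<Rightarrow> real) \<Rightarrow> nat \<Rightarrow> real" where
  "deg n w i = (\<Sum>j\<in>verts n. w i j)"

definition lap :: "nat \<Rightarrow> (nat \<Rightarrow> nat \<Rightarrow> real) \<Rightarrow> real \<Rightarrow> (nat \<Rightarrow> real) \<Rightarrow> nat \<Rightarrow> real" where
  "lap n w r u i = deg n w i powr (- r) * (\<Sum>j\<in>verts n. w i j * (u i - u j))"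

definition mass :: "nat \<Rightarrow> (nat \<Rightarrow> nat \<Rightarrow> real) \<Rightarrow> real \<Rightarrow> (nat \<Rightarrow> real) \<Rightarrow> real" where
  "mass n w r u = (\<Sum>i\<in>verts n. deg n w i powr r * u i)"

definition vol :: "nat \<Rightarrow> (nat \<Rightarrow> nat \<Rightarrow> real) \<Rightarrow> real \<Rightarrow> real" where
  "vol n w r = (\<Sum>i\<in>verts n. deg n w i powr r)"

definition avg :: "nat \<Rightarrow> (nat \<Rightarrow> nat \<Rightarrow> real) \<Rightarrow> real \<Rightarrow> (nat \<Rightarrow> real) \<Rightarrow> real" where
  "avg n w r u = mass n w r u / vol n w r"

text \<open>Equilibrium measure of S (a proper subset of V): the unique function with
Laplacian 1 on S and vanishing off S (we also make it vanish outside V).\<close>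
definition eqm :: "nat \<Rightarrow> (nat \<Rightarrow> nat \<Rightarrow> real) \<Rightarrow> real \<Rightarrow> nat set \<Rightarrow> nat \<Rightarrow> real" where
  "eqm n w r S = (THE \<nu>. (\<forall>i\<in>S. lap n w r \<nu> i = 1) \<and> (\<forall>i. i \<notin> S \<longrightarrow> \<nu> i = 0))"

definition fj :: "nat \<Rightarrow> (nat \<Rightarrow> nat \<Rightarrow> real) \<Rightarrow> real \<Rightarrow> nat \<Rightarrow> nat \<Rightarrow> real" where
  "fj n w r j i = eqm n w r (verts n - {j}) i - avg n w r (eqm n w r (verts n - {j}))"

definition in_C :: "nat \<Rightarrow> (nat \<Rightarrow> nat \<Rightarrow> real) \<Rightarrow> real \<Rightarrow> bool" where
  "in_C n w r \<longleftrightarrow> (\<forall>j\<in>verts n. \<forall>i\<in>verts n. i \<noteq> j \<longrightarrow> fj n w r j i \<ge> 0)"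

definition in_C0 :: "nat \<Rightarrow> (nat \<Rightarrow> nat \<Rightarrow> real) \<Rightarrow> real \<Rightarrow> bool" where
  "in_C0 n w r \<longleftrightarrow> (\<forall>j\<in>verts n. \<forall>i\<in>verts n. i \<noteq> j \<longrightarrow> w i j > 0 \<or> fj n w r j i \<ge> 0)"

definition nbr :: "nat \<Rightarrow> (nat \<Rightarrow> nat \<Rightarrow> real) \<Rightarrow> nat \<Rightarrow> nat set" where
  "nbr n w j = {k\<in>verts n. w j k > 0}"

definition Ns :: "nat \<Rightarrow> (nat \<Rightarrow> nat \<Rightarrow> real) \<Rightarrow> nat \<Rightarrow> nat \<Rightarrow> real" where
  "Ns n w i j = (\<Sum>k\<in>nbr n w j. w i k)"

end

theory Submission imports Defs "Jordan_Normal_Form.Determinant" begin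

text \<open>Let E be the equilibrium measure of V - {j}. It is nonnegative and vanishes at j by the
minimum principle. Let m minimise E over a set T of vertices avoiding j. Since E has Laplacian 1
at m and E m \<le> E k for k \<in> T, only the edges from m leaving T contribute positively, which gives
d_m^r \<le> (\<Sum>k\<notin>T. w m k) E m. Combined with the hypothesis (\<Sum>k\<notin>T. w m k) M(E) \<le> vol(V) d_m^r
this yields A(E) \<le> E m \<le> E i for every i \<in> T. Taking T = V - {j} gives part (1), and
T = V - ({j} \<union> N(j)) gives part (2).\<close>

lemma finite_verts [simp]: "finite (verts n)"
  by (simp add: verts_def)

lemma is_graph_sym: "is_graph n w \<Longrightarrow> i \<in> verts n \<Longrightarrow> j \<in> verts n \<Longrightarrow> w i j = w j i"
  by (simp add: is_graph_def)

lemma is_graph_nonneg: "is_graph n w \<Longrightarrow> i \<in> verts n \<Longrightarrow> j \<in> verts n \<Longrightarrow> 0 \<le> w i j"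
  by (simp add: is_graph_def)

lemma is_graph_connected:
  "is_graph n w \<Longrightarrow> i \<in> verts n \<Longrightarrow> j \<in> verts n \<Longrightarrow> (i, j) \<in> (edge_rel n w)\<^sup>*"
  by (simp add: is_graph_def)

lemma deg_pos:
  assumes G: "is_graph n w" and i: "i \<in> verts n"
  shows "0 < deg n w i"
proof -
  have "n \<ge> 2" using G by (simp add: is_graph_def)
  then obtain k where k: "k \<in> verts n" "k \<noteq> i"
    using i by (cases "i = 1") (auto simp: verts_def intro: that[of 1] that[of 2])
  from is_graph_connected[OF G i k(1)] k(2) obtain y where "(i, y) \<in> edge_rel n w"
    by (cases rule: converse_rtranclE) auto
  then have y: "y \<in> verts n" "0 < w i y" by (auto simp: edge_rel_def)
  have "w i y \<le> deg n w i"
    unfolding deg_def using y is_graph_nonneg[OF G i] by (intro member_le_sum) auto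
  with y show ?thesis by simp
qed

lemma vol_pos:
  assumes G: "is_graph n w"
  shows "0 < vol n w r"
proof -
  have "verts n \<noteq> {}" using G by (auto simp: is_graph_def verts_def)
  moreover have "0 < deg n w i powr r" if "i \<in> verts n" for i
    using deg_pos[OF G that] by simp
  ultimately show ?thesis
    unfolding vol_def by (intro sum_pos) auto
qed

definition comb_lap :: "nat \<Rightarrow> (nat \<Rightarrow> nat \<Rightarrow> real) \<Rightarrow> (nat \<Rightarrow> real) \<Rightarrow> nat \<Rightarrow> real" where
  "comb_lap n w u i = (\<Sum>k\<in>verts n. w i k * (u i - u k))"

lemma comb_lap_cong:
  "(\<And>k. k \<in> verts n \<Longrightarrow> u k = v k) \<Longrightarrow> i \<in> verts n \<Longrightarrow> comb_lap n w u i = comb_lap n w v i"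
  unfolding comb_lap_def by (intro sum.cong) auto

lemma comb_lap_uminus: "comb_lap n w (\<lambda>k. - u k) i = - comb_lap n w u i"
  unfolding comb_lap_def sum_negf[symmetric] by (intro sum.cong) (auto simp: algebra_simps)

lemma comb_lap_diff: "comb_lap n w (\<lambda>k. u k - v k) i = comb_lap n w u i - comb_lap n w v i"
  unfolding comb_lap_def sum_subtractf[symmetric] by (intro sum.cong) (auto simp: algebra_simps)

lemma comb_lap_eq_deg_minus_sum:
  "comb_lap n w u i = deg n w i * u i - (\<Sum>b<n. w i (Suc b) * u (Suc b))"
proof -
  have "comb_lap n w u i = (\<Sum>k\<in>verts n. w i k * u i) - (\<Sum>k\<in>verts n. w i k * u k)"
    unfolding comb_lap_def by (simp add: right_diff_distrib sum_subtractf)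
  also have "(\<Sum>k\<in>verts n. w i k * u i) = deg n w i * u i"
    unfolding deg_def by (simp add: sum_distrib_right)
  also have "(\<Sum>k\<in>verts n. w i k * u k) = (\<Sum>b<n. w i (Suc b) * u (Suc b))"
    unfolding verts_def by (simp add: sum.atLeast1_atMost_eq)
  finally show ?thesis .
qed

lemma lap_eq_1_iff:
  assumes "is_graph n w" and "i \<in> verts n"
  shows "lap n w r u i = 1 \<longleftrightarrow> comb_lap n w u i = deg n w i powr r"
proof -
  have "0 < deg n w i powr r" using deg_pos[OF assms] by simp
  moreover have "lap n w r u i = inverse (deg n w i powr r) * comb_lap n w u i"
    using deg_pos[OF assms] by (simp add: lap_def comb_lap_def powr_minus)
  ultimately show ?thesis by (auto simp: field_simps)
qed

subsection \<open>The maximum principle\<close>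

lemma max_propagates_along_edge:
  assumes G: "is_graph n w" and y: "y \<in> verts n" and z: "z \<in> verts n" and wyz: "0 < w y z"
    and max: "\<forall>k\<in>verts n. u k \<le> u y" and sub: "comb_lap n w u y \<le> 0"
  shows "u z = u y"
proof -
  have nonneg: "\<forall>k\<in>verts n. 0 \<le> w y k * (u y - u k)"
    using max is_graph_nonneg[OF G y] by simp
  then have "comb_lap n w u y = 0"
    using sub unfolding comb_lap_def by (intro antisym sum_nonneg) auto
  then have "\<forall>k\<in>verts n. w y k * (u y - u k) = 0"
    using nonneg unfolding comb_lap_def by (subst (asm) sum_nonneg_eq_0_iff) auto
  then have "w y z * (u y - u z) = 0" using z by blast
  with wyz show ?thesis by simp
qed

lemma max_principle:
  assumes G: "is_graph n w" and j: "j \<in> verts n"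
    and sub: "\<forall>i\<in>verts n - {j}. comb_lap n w u i \<le> 0"
  shows "\<forall>i\<in>verts n. u i \<le> u j"
proof -
  define M where "M = Max (u ` verts n)"
  have le_M: "u k \<le> M" if "k \<in> verts n" for k
    unfolding M_def using that by simp
  have "M \<in> u ` verts n" unfolding M_def using j by (intro Max_in) auto
  then obtain m where m: "m \<in> verts n" "u m = M" by auto
  have "u x = M \<or> u j = M" if "(m, x) \<in> (edge_rel n w)\<^sup>*" for x
    using that
  proof (induction rule: rtrancl_induct)
    case (step y z)
    have y: "y \<in> verts n" and z: "z \<in> verts n" and wyz: "0 < w y z"
      using step.hyps(2) by (auto simp: edge_rel_def)
    show ?case
    proof (cases "u j = M")
      case False
      with step.IH have "u y = M" by simp
      with False sub y have "comb_lap n w u y \<le> 0" by auto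
      with \<open>u y = M\<close> have "u z = u y"
        using max_propagates_along_edge[OF G y z wyz] le_M by auto
      with \<open>u y = M\<close> show ?thesis by simp
    qed simp
  qed (use m in simp)
  with is_graph_connected[OF G m(1) j] have "u j = M" by auto
  with le_M show ?thesis by auto
qed

lemma harmonic_vanishing_at_vertex_is_zero:
  assumes G: "is_graph n w" and j: "j \<in> verts n" and uj: "u j = 0"
    and harm: "\<forall>i\<in>verts n - {j}. comb_lap n w u i = 0"
  shows "\<forall>i\<in>verts n. u i = 0"
proof -
  have "\<forall>i\<in>verts n. u i \<le> u j"
    using harm by (intro max_principle[OF G j]) simp
  moreover have "\<forall>i\<in>verts n. - u i \<le> - u j"
    using harm by (intro max_principle[OF G j]) (simp add: comb_lap_uminus)
  ultimately show ?thesis using uj by force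
qed

subsection \<open>The Dirichlet problem and the equilibrium measure\<close>

lemma mat_solvable_if_kernel_trivial:
  fixes A :: "real mat"
  assumes A: "A \<in> carrier_mat n n" and b: "b \<in> carrier_vec n"
    and inj: "\<And>v. v \<in> carrier_vec n \<Longrightarrow> A *\<^sub>v v = 0\<^sub>v n \<Longrightarrow> v = 0\<^sub>v n"
  shows "\<exists>x\<in>carrier_vec n. A *\<^sub>v x = b"
proof -
  have "det A \<noteq> 0" using det_0_iff_vec_prod_zero_field[OF A] inj by blast
  from det_non_zero_imp_unit[OF A this, of "()"]
  obtain B where B: "B \<in> carrier_mat n n" "A * B = 1\<^sub>m n"
    unfolding Units_def ring_mat_def by auto
  have "A *\<^sub>v (B *\<^sub>v b) = (A * B) *\<^sub>v b" by (rule assoc_mult_mat_vec[symmetric, OF A B(1) b])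
  also have "\<dots> = b" using B b by simp
  finally show ?thesis using B b by (intro bexI[of _ "B *\<^sub>v b"]) auto
qed

text \<open>Row and column a stand for vertex a + 1; row j - 1 imposes the boundary condition at j.\<close>

definition dirichlet_mat :: "nat \<Rightarrow> (nat \<Rightarrow> nat \<Rightarrow> real) \<Rightarrow> nat \<Rightarrow> real mat" where
  "dirichlet_mat n w j = mat n n (\<lambda>(a, b).
     if Suc a = j then (if b = a then 1 else 0)
     else (if a = b then deg n w (Suc a) else 0) - w (Suc a) (Suc b))"

lemma dirichlet_mat_mult_vec:
  assumes a: "a < n" and v: "v \<in> carrier_vec n"
  shows "(dirichlet_mat n w j *\<^sub>v v) $ a =
    (if Suc a = j then v $ a else comb_lap n w (\<lambda>k. v $ (k - 1)) (Suc a))"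
proof -
  have row: "(dirichlet_mat n w j *\<^sub>v v) $ a = (\<Sum>b<n. dirichlet_mat n w j $$ (a, b) * v $ b)"
    using a v unfolding dirichlet_mat_def by (simp add: scalar_prod_def atLeast0LessThan)
  show ?thesis
  proof (cases "Suc a = j")
    case True
    then have "(\<Sum>b<n. dirichlet_mat n w j $$ (a, b) * v $ b) = (\<Sum>b<n. if b = a then v $ b else 0)"
      using a by (intro sum.cong) (auto simp: dirichlet_mat_def)
    with row a True show ?thesis by simp
  next
    case False
    then have "(\<Sum>b<n. dirichlet_mat n w j $$ (a, b) * v $ b) =
        (\<Sum>b<n. (if a = b then deg n w (Suc a) * v $ b else 0) - w (Suc a) (Suc b) * v $ b)"
      using a by (intro sum.cong) (auto simp: dirichlet_mat_def left_diff_distrib)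
    with row a False show ?thesis by (simp add: sum_subtractf comb_lap_eq_deg_minus_sum)
  qed
qed

lemma dirichlet_solvable:
  assumes G: "is_graph n w" and j: "j \<in> verts n"
  shows "\<exists>u. u j = 0 \<and> (\<forall>i\<in>verts n - {j}. comb_lap n w u i = g i)"
proof -
  define A where "A = dirichlet_mat n w j"
  define b where "b = vec n (\<lambda>a. if Suc a = j then 0 else g (Suc a))"
  define fun_of where "fun_of v = (\<lambda>k. v $ (k - 1))" for v :: "real vec"
  have row: "(A *\<^sub>v v) $ (i - 1) = (if i = j then fun_of v i else comb_lap n w (fun_of v) i)"
    if "v \<in> carrier_vec n" "i \<in> verts n" for v i
    using that dirichlet_mat_mult_vec[of "i - 1" n v w j]
    by (auto simp: A_def fun_of_def verts_def)
  have inj: "v = 0\<^sub>v n" if v: "v \<in> carrier_vec n" and Av: "A *\<^sub>v v = 0\<^sub>v n" for v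
  proof -
    have Av0: "(A *\<^sub>v v) $ (i - 1) = 0" if "i \<in> verts n" for i
    proof -
      have "i - 1 < n" using that by (auto simp: verts_def)
      with Av show ?thesis by simp
    qed
    have "fun_of v j = 0" using Av0[OF j] row[OF v j] by simp
    moreover have "\<forall>i\<in>verts n - {j}. comb_lap n w (fun_of v) i = 0"
    proof
      fix i assume "i \<in> verts n - {j}"
      with Av0[of i] row[OF v, of i] show "comb_lap n w (fun_of v) i = 0" by auto
    qed
    ultimately have zero: "\<forall>i\<in>verts n. fun_of v i = 0"
      by (rule harmonic_vanishing_at_vertex_is_zero[OF G j])
    show ?thesis
    proof (rule eq_vecI)
      fix a assume "a < dim_vec (0\<^sub>v n :: real vec)"
      then have "a < n" "Suc a \<in> verts n" by (simp_all add: verts_def)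
      with zero show "v $ a = 0\<^sub>v n $ a" by (force simp: fun_of_def)
    qed (use v in simp)
  qed
  have "A \<in> carrier_mat n n" "b \<in> carrier_vec n"
    by (simp_all add: A_def dirichlet_mat_def b_def)
  with mat_solvable_if_kernel_trivial inj obtain x where x: "x \<in> carrier_vec n" "A *\<^sub>v x = b"
    by blast
  have Ax: "(A *\<^sub>v x) $ (i - 1) = (if i = j then 0 else g i)" if "i \<in> verts n" for i
    using x(2) that by (auto simp: b_def verts_def)
  have "fun_of x j = 0" using Ax[OF j] row[OF x(1) j] by simp
  moreover have "\<forall>i\<in>verts n - {j}. comb_lap n w (fun_of x) i = g i"
  proof
    fix i assume "i \<in> verts n - {j}"
    with Ax[of i] row[OF x(1), of i] show "comb_lap n w (fun_of x) i = g i" by auto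
  qed
  ultimately show ?thesis by blast
qed

lemma eqm_eqI:
  assumes G: "is_graph n w" and j: "j \<in> verts n"
    and lap_nu: "\<forall>i\<in>verts n - {j}. comb_lap n w \<nu> i = deg n w i powr r"
    and supp_nu: "\<forall>i. i \<notin> verts n - {j} \<longrightarrow> \<nu> i = 0"
  shows "eqm n w r (verts n - {j}) = \<nu>"
  unfolding eqm_def
proof (rule the_equality)
  have lap_iff: "lap n w r \<mu> i = 1 \<longleftrightarrow> comb_lap n w \<mu> i = deg n w i powr r"
    if "i \<in> verts n - {j}" for \<mu> i
    using lap_eq_1_iff[OF G] that by blast
  then show "(\<forall>i\<in>verts n - {j}. lap n w r \<nu> i = 1) \<and> (\<forall>i. i \<notin> verts n - {j} \<longrightarrow> \<nu> i = 0)"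
    using lap_nu supp_nu by simp
  fix \<mu> assume \<mu>: "(\<forall>i\<in>verts n - {j}. lap n w r \<mu> i = 1) \<and> (\<forall>i. i \<notin> verts n - {j} \<longrightarrow> \<mu> i = 0)"
  with lap_iff have "\<forall>i\<in>verts n - {j}. comb_lap n w \<mu> i = deg n w i powr r"
    by simp
  with lap_nu have harm: "\<forall>i\<in>verts n - {j}. comb_lap n w (\<lambda>k. \<mu> k - \<nu> k) i = 0"
    by (simp add: comb_lap_diff)
  have "\<mu> j - \<nu> j = 0" using \<mu> supp_nu by simp
  from harmonic_vanishing_at_vertex_is_zero[OF G j this harm]
  have "\<forall>i\<in>verts n. \<mu> i = \<nu> i" by simp
  with \<mu> supp_nu show "\<mu> = \<nu>"
    by (intro ext) (metis DiffD1)
qed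

lemma eqm_comb_lap_and_support:
  assumes G: "is_graph n w" and j: "j \<in> verts n"
  shows "\<forall>i\<in>verts n - {j}. comb_lap n w (eqm n w r (verts n - {j})) i = deg n w i powr r"
    and "\<forall>i. i \<notin> verts n - {j} \<longrightarrow> eqm n w r (verts n - {j}) i = 0"
proof -
  obtain u where u: "u j = 0" "\<forall>i\<in>verts n - {j}. comb_lap n w u i = deg n w i powr r"
    using dirichlet_solvable[OF G j, where g = "\<lambda>i. deg n w i powr r"] by blast
  define \<nu> where "\<nu> k = (if k \<in> verts n - {j} then u k else 0)" for k
  have "comb_lap n w \<nu> i = comb_lap n w u i" if "i \<in> verts n" for i
    using that u(1) by (intro comb_lap_cong) (auto simp: \<nu>_def)
  with u(2) have "\<forall>i\<in>verts n - {j}. comb_lap n w \<nu> i = deg n w i powr r"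
    by simp
  moreover have "\<forall>i. i \<notin> verts n - {j} \<longrightarrow> \<nu> i = 0" by (simp add: \<nu>_def)
  ultimately show "\<forall>i\<in>verts n - {j}. comb_lap n w (eqm n w r (verts n - {j})) i = deg n w i powr r"
    and "\<forall>i. i \<notin> verts n - {j} \<longrightarrow> eqm n w r (verts n - {j}) i = 0"
    using eqm_eqI[OF G j] by simp_all
qed

lemma eqm_nonneg:
  assumes G: "is_graph n w" and j: "j \<in> verts n" and k: "k \<in> verts n"
  shows "0 \<le> eqm n w r (verts n - {j}) k"
proof -
  let ?E = "eqm n w r (verts n - {j})"
  have "\<forall>i\<in>verts n - {j}. comb_lap n w (\<lambda>k. - ?E k) i \<le> 0"
    using eqm_comb_lap_and_support(1)[OF G j] by (simp add: comb_lap_uminus)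
  with max_principle[OF G j] k have "- ?E k \<le> - ?E j" by blast
  with eqm_comb_lap_and_support(2)[OF G j] show ?thesis by simp
qed

subsection \<open>Comparison of the equilibrium measure with its average\<close>

lemma eqm_min_le_boundary_weight:
  assumes G: "is_graph n w" and j: "j \<in> verts n" and T: "T \<subseteq> verts n - {j}"
    and m: "m \<in> T" and min: "\<forall>k\<in>T. eqm n w r (verts n - {j}) m \<le> eqm n w r (verts n - {j}) k"
  shows "deg n w m powr r \<le> (\<Sum>k\<in>verts n - T. w m k) * eqm n w r (verts n - {j}) m"
proof -
  let ?E = "eqm n w r (verts n - {j})"
  have mS: "m \<in> verts n - {j}" using T m by blast
  then have mV: "m \<in> verts n" by simp
  have "deg n w m powr r = (\<Sum>k\<in>verts n. w m k * (?E m - ?E k))"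
    using eqm_comb_lap_and_support(1)[OF G j, of r] mS by (simp add: comb_lap_def)
  also have "\<dots> \<le> (\<Sum>k\<in>verts n. if k \<notin> T then w m k * ?E m else 0)"
  proof (rule sum_mono)
    fix k assume k: "k \<in> verts n"
    have w_nonneg: "0 \<le> w m k" using is_graph_nonneg[OF G mV k] .
    show "w m k * (?E m - ?E k) \<le> (if k \<notin> T then w m k * ?E m else 0)"
    proof (cases "k \<in> T")
      case True
      with min have "?E m - ?E k \<le> 0" by simp
      with w_nonneg True show ?thesis by (simp add: mult_nonneg_nonpos)
    next
      case False
      with w_nonneg eqm_nonneg[OF G j k] show ?thesis by (simp add: right_diff_distrib)
    qed
  qed
  also have "\<dots> = (\<Sum>k\<in>verts n - T. w m k) * ?E m"
    by (simp add: sum.inter_filter[symmetric] set_diff_eq sum_distrib_right)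
  finally show ?thesis .
qed

lemma divide_le_of_weighted_bounds:
  fixes c d M V x :: real
  assumes V: "0 < V" and d: "0 < d" and c: "0 \<le> c"
    and upper: "c * M \<le> V * d" and lower: "d \<le> c * x"
  shows "M / V \<le> x"
proof -
  have "0 < c"
  proof (rule ccontr)
    assume "\<not> 0 < c"
    with c have "c = 0" by simp
    with d lower show False by simp
  qed
  have "c * M \<le> V * d" by (fact upper)
  also have "\<dots> \<le> V * (c * x)" using V lower by simp
  finally have "c * M \<le> c * (V * x)" by (simp add: algebra_simps)
  with \<open>0 < c\<close> have "M \<le> V * x" by simp
  with V show ?thesis by (simp add: pos_divide_le_eq mult.commute)
qed

lemma avg_eqm_le_on_set:
  assumes G: "is_graph n w" and j: "j \<in> verts n" and T: "T \<subseteq> verts n - {j}" and i: "i \<in> T"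
    and hyp: "\<forall>m\<in>T. (\<Sum>k\<in>verts n - T. w m k) * mass n w r (eqm n w r (verts n - {j}))
                       \<le> vol n w r * deg n w m powr r"
  shows "avg n w r (eqm n w r (verts n - {j})) \<le> eqm n w r (verts n - {j}) i"
proof -
  let ?E = "eqm n w r (verts n - {j})"
  have fin: "finite T" by (rule finite_subset[OF T]) simp
  have "Min (?E ` T) \<in> ?E ` T" using fin i by (intro Min_in) auto
  then obtain m where m_Min: "Min (?E ` T) = ?E m" and m: "m \<in> T" by (rule imageE)
  have min: "\<forall>k\<in>T. ?E m \<le> ?E k" unfolding m_Min[symmetric] using fin by simp
  have mV: "m \<in> verts n" using T m by blast
  have c: "0 \<le> (\<Sum>k\<in>verts n - T. w m k)"
    using is_graph_nonneg[OF G mV] by (intro sum_nonneg) auto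
  have d: "0 < deg n w m powr r" using deg_pos[OF G mV] by simp
  have upper: "(\<Sum>k\<in>verts n - T. w m k) * mass n w r ?E \<le> vol n w r * deg n w m powr r"
    using hyp m by blast
  note lower = eqm_min_le_boundary_weight[OF G j T m min]
  have "avg n w r ?E \<le> ?E m"
    unfolding avg_def by (rule divide_le_of_weighted_bounds[OF vol_pos[OF G] d c upper lower])
  also have "\<dots> \<le> ?E i" using min i by blast
  finally show ?thesis .
qed

lemma in_C_if_edge_weight_bound:
  assumes G: "is_graph n w"
    and hyp: "\<forall>j\<in>verts n. \<forall>i\<in>nbr n w j.
                w i j * mass n w r (eqm n w r (verts n - {j})) \<le> vol n w r * deg n w i powr r"
  shows "in_C n w r"
  unfolding in_C_def fj_def
proof (intro ballI impI)
  fix j i assume j: "j \<in> verts n" and i: "i \<in> verts n" "i \<noteq> j"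
  let ?T = "verts n - {j}"
  have "\<forall>m\<in>?T. (\<Sum>k\<in>verts n - ?T. w m k) * mass n w r (eqm n w r ?T) \<le> vol n w r * deg n w m powr r"
  proof
    fix m assume m: "m \<in> ?T"
    have "verts n - ?T = {j}" using j by blast
    moreover have "w m j * mass n w r (eqm n w r ?T) \<le> vol n w r * deg n w m powr r"
    proof (cases "m \<in> nbr n w j")
      case False
      with m j have "w m j = 0"
        using is_graph_sym[OF G, of m j] is_graph_nonneg[OF G, of m j] by (auto simp: nbr_def)
      with vol_pos[OF G, of r] show ?thesis by simp
    qed (use hyp j in blast)
    ultimately show "(\<Sum>k\<in>verts n - ?T. w m k) * mass n w r (eqm n w r ?T) \<le> vol n w r * deg n w m powr r"
      by simp
  qed
  with i have "avg n w r (eqm n w r ?T) \<le> eqm n w r ?T i"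
    by (intro avg_eqm_le_on_set[OF G j, of ?T]) auto
  then show "0 \<le> eqm n w r ?T i - avg n w r (eqm n w r ?T)"
    by simp
qed

lemma in_C0_if_neighbourhood_weight_bound:
  assumes G: "is_graph n w"
    and hyp: "\<forall>j\<in>verts n. \<forall>i\<in>verts n - ({j} \<union> nbr n w j).
                Ns n w i j * mass n w r (eqm n w r (verts n - {j})) \<le> vol n w r * deg n w i powr r"
  shows "in_C0 n w r"
  unfolding in_C0_def fj_def disj_imp
proof (intro ballI impI)
  fix j i assume j: "j \<in> verts n" and i: "i \<in> verts n" "i \<noteq> j" and wij: "\<not> 0 < w i j"
  let ?E = "eqm n w r (verts n - {j})"
  define T where "T = verts n - ({j} \<union> nbr n w j)"
  have "\<forall>m\<in>T. (\<Sum>k\<in>verts n - T. w m k) * mass n w r ?E \<le> vol n w r * deg n w m powr r"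
  proof
    fix m assume m: "m \<in> T"
    have "verts n - T = insert j (nbr n w j)" using j by (auto simp: T_def nbr_def)
    moreover from m j have "w m j = 0"
      using is_graph_sym[OF G, of m j] is_graph_nonneg[OF G, of m j] by (auto simp: T_def nbr_def)
    then have "(\<Sum>k\<in>insert j (nbr n w j). w m k) = Ns n w m j"
      by (simp add: Ns_def sum.insert_if nbr_def)
    moreover have "Ns n w m j * mass n w r ?E \<le> vol n w r * deg n w m powr r"
      using hyp j m by (auto simp: T_def)
    ultimately show "(\<Sum>k\<in>verts n - T. w m k) * mass n w r ?E \<le> vol n w r * deg n w m powr r"
      by simp
  qed
  moreover have "i \<in> T"
    using i j wij is_graph_sym[OF G i(1) j] by (auto simp: T_def nbr_def)
  ultimately have "avg n w r ?E \<le> ?E i"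
    by (intro avg_eqm_le_on_set[OF G j, of T]) (auto simp: T_def)
  then show "0 \<le> ?E i - avg n w r ?E"
    by simp
qed

theorem lemma6p6:
  fixes n :: nat and w :: "nat \<Rightarrow> nat \<Rightarrow> real" and r :: real
  assumes "is_graph n w" and "0 \<le> r" and "r \<le> 1"
  shows "((\<forall>j\<in>verts n. \<forall>i\<in>nbr n w j.
            w i j * mass n w r (eqm n w r (verts n - {j})) \<le> vol n w r * deg n w i powr r)
          \<longrightarrow> in_C n w r)
       \<and> ((\<forall>j\<in>verts n. \<forall>i\<in>verts n - ({j} \<union> nbr n w j).
            Ns n w i j * mass n w r (eqm n w r (verts n - {j})) \<le> vol n w r * deg n w i powr r)
          \<longrightarrow> in_C0 n w r)"
  using in_C_if_edge_weight_bound[OF assms(1)] in_C0_if_neighbourhood_weight_bound[OF assms(1)]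
  by blast

end
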